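(* Fix any ordering $e_1,\dots,e_n$ of $V$, and let $S_L$ be the set of elements selected by Algorithm 3 among the positions $i\le\beta n$. Suppose $f(S_L)\ge\alpha\,\mathrm{OPT}$ with $\alpha=3\cdot10^{-3}$, and $0.9\beta k\le|\mathcal O_L|\le1.1\beta k$, where $\mathcal O_L$ is the set of elements of $\mathcal O$ at positions $i\le\beta n$. Then the output $S$ of Algorithm 3 satisfies $f(S)\ge(0.5+9\cdot10^{-12})\mathrm{OPT}$.
   Context: $V$ is a finite ground set with $|V|=n$; $f:2^V\to\mathbb{R}_{\ge0}$ is monotone, submodular and normalized; $f(X\mid Y)=f(X\cup Y)-f(Y)$, $f(e\mid Y)=f(\{e\}\mid Y)$. $k\le n$ is a positive integer, $\mathrm{OPT}=\max\{f(S):S\subseteq V,|S|\le k\}$, and $\mathcal O$ is a fixed set with $|\mathcal O|=k$, $f(\mathcal O)=\mathrm{OPT}$. Algorithm 3 (knows $\mathrm{OPT}$), with $\beta=10^{-3}$, $\epsilon=10^{-8}$, $\delta=3\cdot10^{-11}$: start with $S=\emptyset$; for $i=1,\dots,n$, add $e_i$ to $S$ if $|S|<k$ and either ($i\le\beta n$ and $f(e_i\mid S)\ge\frac{1+\epsilon}{2}\cdot\frac{\mathrm{OPT}}{k}$) or ($i>\beta n$ and $f(e_i\mid S)\ge\frac{1-\delta}{2}\cdot\frac{\mathrm{OPT}}{k}$); return $S$. *)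

theory Defs
  imports Complex_Main
begin

definition marg :: "('a set \<Rightarrow> real) \<Rightarrow> 'a set \<Rightarrow> 'a set \<Rightarrow> real" where
  "marg f X Y = f (X \<union> Y) - f Y"

definition monotone_set_fun :: "'a set \<Rightarrow> ('a set \<Rightarrow> real) \<Rightarrow> bool" where
  "monotone_set_fun V f \<longleftrightarrow> (\<forall>A B. A \<subseteq> B \<and> B \<subseteq> V \<longrightarrow> f A \<le> f B)"

definition submodular_set_fun :: "'a set \<Rightarrow> ('a set \<Rightarrow> real) \<Rightarrow> bool" where
  "submodular_set_fun V f \<longleftrightarrow>
     (\<forall>A B. A \<subseteq> V \<and> B \<subseteq> V \<longrightarrow> f (A \<union> B) + f (A \<inter> B) \<le> f A + f B)"

definition OPT_val :: "'a set \<Rightarrow> ('a set \<Rightarrow> real) \<Rightarrow> nat \<Rightarrow> real" where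
  "OPT_val V f k = Max {f S | S. S \<subseteq> V \<and> card S \<le> k}"

definition alg_beta :: real where "alg_beta = 1 / 10^3"
definition alg_eps :: real where "alg_eps = 1 / 10^8"
definition alg_delta :: real where "alg_delta = 3 / 10^11"

text \<open>State of Algorithm 3 after processing the first m positions of the ordering es
  (es ! (i-1) is the element e_i); opt is the value OPT known to the algorithm.\<close>
fun alg3_run :: "('a set \<Rightarrow> real) \<Rightarrow> nat \<Rightarrow> real \<Rightarrow> 'a list \<Rightarrow> nat \<Rightarrow> 'a set" where
  "alg3_run f k opt es 0 = {}"
| "alg3_run f k opt es (Suc m) =
     (let S = alg3_run f k opt es m; i = Suc m; e = es ! m; n = length es in
      if card S < k \<and>
         ((real i \<le> alg_beta * real n \<and> marg f {e} S \<ge> (1 + alg_eps) / 2 * (opt / real k)) \<or>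
          (real i > alg_beta * real n \<and> marg f {e} S \<ge> (1 - alg_delta) / 2 * (opt / real k)))
      then insert e S else S)"

definition alg3 :: "('a set \<Rightarrow> real) \<Rightarrow> nat \<Rightarrow> real \<Rightarrow> 'a list \<Rightarrow> 'a set" where
  "alg3 f k opt es = alg3_run f k opt es (length es)"

definition alg3_SL :: "('a set \<Rightarrow> real) \<Rightarrow> nat \<Rightarrow> real \<Rightarrow> 'a list \<Rightarrow> 'a set" where
  "alg3_SL f k opt es = alg3_run f k opt es (nat \<lfloor>alg_beta * real (length es)\<rfloor>)"

end

theory Submission
  imports Defs
begin

text \<open>Every element the algorithm takes raises f by at least the threshold in force. If S
  fills up, each element taken in the first phase contributes (1 + \<epsilon>)/2 \<cdot> OPT/k, and since
  f(S_L) \<ge> \<alpha> OPT there are enough of them to outweigh the loss \<delta>/2 per element of the second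
  phase. If S does not fill up, every element of \<O> outside S was rejected, so by submodularity
  its marginal gain on S is below the threshold at its position; hence f(\<O> \<union> S) is at most
  f(S) plus the sum of these thresholds, and only the |\<O>_L| \<le> 1.1\<beta>k early elements pay the larger
  one.\<close>

lemma monotone_set_funD: "monotone_set_fun V f \<Longrightarrow> A \<subseteq> B \<Longrightarrow> B \<subseteq> V \<Longrightarrow> f A \<le> f B"
  unfolding monotone_set_fun_def by blast

lemma submodular_set_funD:
  "submodular_set_fun V f \<Longrightarrow> A \<subseteq> V \<Longrightarrow> B \<subseteq> V \<Longrightarrow> f (A \<union> B) + f (A \<inter> B) \<le> f A + f B"
  unfolding submodular_set_fun_def by blast

lemma marg_eq_0_if_mem: "e \<in> S \<Longrightarrow> marg f {e} S = 0"
  by (simp add: marg_def insert_absorb)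

lemma marg_antimono:
  assumes mono: "monotone_set_fun V f" and submod: "submodular_set_fun V f"
    and "A \<subseteq> B" "B \<subseteq> V" "x \<in> V"
  shows "marg f {x} B \<le> marg f {x} A"
proof (cases "x \<in> B")
  case True
  have "f A \<le> f (insert x A)"
    using monotone_set_funD[OF mono, of A "insert x A"] assms(3-5) by blast
  then show ?thesis using True by (simp add: marg_def insert_absorb)
next
  case False
  have "f (insert x A \<union> B) + f (insert x A \<inter> B) \<le> f (insert x A) + f B"
    using submodular_set_funD[OF submod, of "insert x A" B] assms(3-5) by blast
  moreover have "insert x A \<inter> B = A" "insert x A \<union> B = insert x B"
    using False \<open>A \<subseteq> B\<close> by blast+
  ultimately show ?thesis by (simp add: marg_def)
qed

lemma submodular_le_sum_marg:
  assumes submod: "submodular_set_fun V f" and "finite A" "A \<subseteq> V" "S \<subseteq> V"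
  shows "f (A \<union> S) \<le> f S + (\<Sum>y\<in>A. marg f {y} S)"
  using \<open>finite A\<close> \<open>A \<subseteq> V\<close>
proof (induction A rule: finite_induct)
  case empty
  then show ?case by simp
next
  case (insert x A)
  have "f (insert x S \<union> (A \<union> S)) + f (insert x S \<inter> (A \<union> S)) \<le> f (insert x S) + f (A \<union> S)"
    using submodular_set_funD[OF submod, of "insert x S" "A \<union> S"] insert.prems \<open>S \<subseteq> V\<close> by blast
  moreover have "insert x S \<inter> (A \<union> S) = S" "insert x S \<union> (A \<union> S) = insert x A \<union> S"
    using insert.hyps by blast+
  ultimately have "f (insert x A \<union> S) \<le> f (A \<union> S) + marg f {x} S"
    by (simp add: marg_def)
  then show ?case using insert by simp
qed

lemma le_alg_beta_mult_iff: "real i \<le> alg_beta * real n \<longleftrightarrow> i \<le> nat \<lfloor>alg_beta * real n\<rfloor>"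
  by (simp add: alg_beta_def le_nat_iff le_floor_iff)

lemma nat_floor_alg_beta_mult_le: "nat \<lfloor>alg_beta * real n\<rfloor> \<le> n"
proof -
  have "alg_beta * real n \<le> real n" by (simp add: alg_beta_def)
  then have "\<lfloor>alg_beta * real n\<rfloor> \<le> int n" by (metis floor_mono floor_of_nat)
  then show ?thesis by (simp add: nat_le_iff)
qed

definition alg3_threshold :: "nat \<Rightarrow> real \<Rightarrow> nat \<Rightarrow> nat \<Rightarrow> real" where
  "alg3_threshold k opt n i =
     (if real i \<le> alg_beta * real n then (1 + alg_eps) / 2 else (1 - alg_delta) / 2) * (opt / real k)"

lemma alg3_threshold_bounds:
  assumes "0 \<le> opt"
  shows "(1 - alg_delta) / 2 * (opt / real k) \<le> alg3_threshold k opt n i"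
    and "alg3_threshold k opt n i \<le> (1 + alg_eps) / 2 * (opt / real k)"
proof -
  have "0 \<le> opt / real k" using assms by simp
  moreover have "(1 - alg_delta) / 2 \<le> (1 + alg_eps) / 2" by (simp add: alg_eps_def alg_delta_def)
  ultimately have "(1 - alg_delta) / 2 * (opt / real k) \<le> (1 + alg_eps) / 2 * (opt / real k)"
    by (rule mult_right_mono[rotated])
  then show "(1 - alg_delta) / 2 * (opt / real k) \<le> alg3_threshold k opt n i"
    and "alg3_threshold k opt n i \<le> (1 + alg_eps) / 2 * (opt / real k)"
    unfolding alg3_threshold_def by simp_all
qed

context
  fixes f :: "'a set \<Rightarrow> real" and k :: nat and opt :: real and es :: "'a list"
begin

lemma alg3_run_Suc_threshold:
  "alg3_run f k opt es (Suc m) =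
     (let S = alg3_run f k opt es m in
      if card S < k \<and> alg3_threshold k opt (length es) (Suc m) \<le> marg f {es ! m} S
      then insert (es ! m) S else S)"
  by (simp add: Let_def alg3_threshold_def)

lemma alg3_run_mono: "m \<le> m' \<Longrightarrow> alg3_run f k opt es m \<subseteq> alg3_run f k opt es m'"
  by (induction m' rule: dec_induct) (auto simp: Let_def)

lemma alg3_run_subset: "m \<le> length es \<Longrightarrow> alg3_run f k opt es m \<subseteq> set es"
  by (induction m) (auto simp: Let_def)

lemma finite_alg3_run: "finite (alg3_run f k opt es m)"
  by (induction m) (auto simp: Let_def)

lemma card_alg3_run_le: "card (alg3_run f k opt es m) \<le> k"
  by (induction m) (auto simp: Let_def card_insert_if finite_alg3_run)

lemma alg3_run_gain:
  assumes "m \<le> m'" and "\<And>i. m < i \<Longrightarrow> i \<le> m' \<Longrightarrow> \<tau> \<le> alg3_threshold k opt (length es) i"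
  shows "(real (card (alg3_run f k opt es m')) - real (card (alg3_run f k opt es m))) * \<tau>
           \<le> f (alg3_run f k opt es m') - f (alg3_run f k opt es m)"
  using assms
proof (induction m' rule: dec_induct)
  case base
  then show ?case by simp
next
  case (step j)
  let ?S = "alg3_run f k opt es j" and ?e = "es ! j"
  have IH: "(real (card ?S) - real (card (alg3_run f k opt es m))) * \<tau>
              \<le> f ?S - f (alg3_run f k opt es m)"
    using step by simp
  show ?case
  proof (cases "?e \<notin> ?S \<and> card ?S < k \<and> alg3_threshold k opt (length es) (Suc j) \<le> marg f {?e} ?S")
    case True
    then have "alg3_run f k opt es (Suc j) = insert ?e ?S"
      unfolding alg3_run_Suc_threshold by simp
    moreover have "card (insert ?e ?S) = Suc (card ?S)" "f (insert ?e ?S) = f ?S + marg f {?e} ?S"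
      using True by (simp_all add: finite_alg3_run marg_def)
    moreover have "\<tau> \<le> marg f {?e} ?S"
      using True step.hyps step.prems[of "Suc j"] by simp
    ultimately show ?thesis using IH by (simp add: algebra_simps)
  next
    case False
    then have "alg3_run f k opt es (Suc j) = ?S"
      unfolding alg3_run_Suc_threshold by (auto simp: Let_def insert_absorb)
    then show ?thesis using IH by simp
  qed
qed

lemma marg_lt_threshold_if_rejected:
  assumes "j < length es" "es ! j \<notin> alg3 f k opt es" "card (alg3 f k opt es) < k"
  shows "marg f {es ! j} (alg3_run f k opt es j) < alg3_threshold k opt (length es) (Suc j)"
proof -
  let ?S = "alg3_run f k opt es j"
  have "alg3_run f k opt es (Suc j) \<subseteq> alg3 f k opt es"
    unfolding alg3_def using \<open>j < length es\<close> by (intro alg3_run_mono) simp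
  moreover have "?S \<subseteq> alg3 f k opt es"
    unfolding alg3_def using \<open>j < length es\<close> by (intro alg3_run_mono) simp
  ultimately have "es ! j \<notin> alg3_run f k opt es (Suc j)" "card ?S < k"
    using assms(2,3) card_mono[of "alg3 f k opt es" ?S] finite_alg3_run
    by (auto simp: alg3_def simp del: alg3_run.simps)
  then show ?thesis unfolding alg3_run_Suc_threshold by (auto simp: Let_def split: if_splits)
qed

lemma alg3_value_if_full:
  assumes full: "card (alg3 f k opt es) = k" and "0 < k" "0 \<le> opt" "f {} = 0"
    and SL: "3 / 10^3 * opt \<le> f (alg3_SL f k opt es)"
  shows "(1/2 + 9 / 10^12) * opt \<le> f (alg3 f k opt es)"
proof -
  define m0 where "m0 = nat \<lfloor>alg_beta * real (length es)\<rfloor>"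
  define T where "T = opt / real k"
  define c where "c = real (card (alg3_SL f k opt es)) * T"
  have "real (card (alg3_SL f k opt es)) * ((1 + alg_eps) / 2 * T) \<le> f (alg3_SL f k opt es)"
    using alg3_run_gain[of 0 m0 "(1 + alg_eps) / 2 * T"] \<open>f {} = 0\<close>
    by (simp add: alg3_SL_def alg3_threshold_def T_def m0_def le_alg_beta_mult_iff)
  then have early: "(1 + alg_eps) / 2 * c \<le> f (alg3_SL f k opt es)"
    by (simp add: c_def mult_ac)
  have "(real k - real (card (alg3_SL f k opt es))) * ((1 - alg_delta) / 2 * T)
          \<le> f (alg3 f k opt es) - f (alg3_SL f k opt es)"
    using alg3_run_gain[of m0 "length es" "(1 - alg_delta) / 2 * T"] full
      alg3_threshold_bounds(1)[OF \<open>0 \<le> opt\<close>] nat_floor_alg_beta_mult_le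
    by (simp add: alg3_SL_def alg3_def T_def m0_def)
  moreover have "real k * T = opt" using \<open>0 < k\<close> by (simp add: T_def)
  ultimately have late: "(1 - alg_delta) / 2 * (opt - c)
                           \<le> f (alg3 f k opt es) - f (alg3_SL f k opt es)"
    by (simp add: c_def algebra_simps)
  show ?thesis
    using early late SL \<open>0 \<le> opt\<close> unfolding alg_eps_def alg_delta_def by (simp add: field_simps)
qed

lemma marg_alg3_le_threshold:
  assumes mono: "monotone_set_fun (set es) f" and submod: "submodular_set_fun (set es) f"
    and not_full: "card (alg3 f k opt es) < k" and "0 \<le> opt" and "y \<in> set es"
  shows "marg f {y} (alg3 f k opt es)
           \<le> (if y \<in> set (take (nat \<lfloor>alg_beta * real (length es)\<rfloor>) es)
               then (1 + alg_eps) / 2 * (opt / real k) else (1 - alg_delta) / 2 * (opt / real k))"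
    (is "_ \<le> (if y \<in> ?L then ?a else ?b)")
proof (cases "y \<in> alg3 f k opt es")
  case True
  then show ?thesis
    using \<open>0 \<le> opt\<close> by (simp add: marg_eq_0_if_mem alg_eps_def alg_delta_def)
next
  case False
  obtain j where j: "j < length es" "es ! j = y"
    using \<open>y \<in> set es\<close> by (auto simp: in_set_conv_nth)
  have "marg f {y} (alg3 f k opt es) \<le> marg f {y} (alg3_run f k opt es j)"
    using marg_antimono[OF mono submod alg3_run_mono[of j "length es"]] j alg3_run_subset \<open>y \<in> set es\<close>
    by (simp add: alg3_def)
  also have "\<dots> < alg3_threshold k opt (length es) (Suc j)"
    using marg_lt_threshold_if_rejected[OF j(1)] j False not_full by simp
  also have "\<dots> \<le> (if y \<in> ?L then ?a else ?b)"
  proof (cases "y \<in> ?L")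
    case False
    then have "\<not> Suc j \<le> nat \<lfloor>alg_beta * real (length es)\<rfloor>"
      using j by (force simp: in_set_conv_nth Suc_le_eq)
    then have "\<not> real (Suc j) \<le> alg_beta * real (length es)"
      using le_alg_beta_mult_iff by blast
    then show ?thesis
      using False by (simp add: alg3_threshold_def)
  qed (use alg3_threshold_bounds(2)[OF \<open>0 \<le> opt\<close>] in simp)
  finally show ?thesis by simp
qed

lemma alg3_value_if_not_full:
  assumes mono: "monotone_set_fun (set es) f" and submod: "submodular_set_fun (set es) f"
    and not_full: "card (alg3 f k opt es) < k"
    and "Ostar \<subseteq> set es" "card Ostar = k" "f Ostar = opt" "0 \<le> opt"
    and OL: "real (card (Ostar \<inter> set (take (nat \<lfloor>alg_beta * real (length es)\<rfloor>) es)))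
               \<le> 11 / 10 * alg_beta * real k"
  shows "(1/2 + 9 / 10^12) * opt \<le> f (alg3 f k opt es)"
proof -
  define S where "S = alg3 f k opt es"
  define L where "L = set (take (nat \<lfloor>alg_beta * real (length es)\<rfloor>) es)"
  define T where "T = opt / real k"
  define a where "a = (1 + alg_eps) / 2 * T"
  define b where "b = (1 - alg_delta) / 2 * T"
  define q where "q = real (card (Ostar \<inter> L)) * T"
  have SV: "S \<subseteq> set es" using alg3_run_subset by (simp add: S_def alg3_def)
  have "finite Ostar" using \<open>Ostar \<subseteq> set es\<close> finite_subset by blast
  have "opt \<le> f (Ostar \<union> S)"
    using monotone_set_funD[OF mono, of Ostar "Ostar \<union> S"] \<open>f Ostar = opt\<close> \<open>Ostar \<subseteq> set es\<close> SV
    by blast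
  also have "\<dots> \<le> f S + (\<Sum>y\<in>Ostar. marg f {y} S)"
    using submodular_le_sum_marg[OF submod \<open>finite Ostar\<close> \<open>Ostar \<subseteq> set es\<close> SV] .
  also have "(\<Sum>y\<in>Ostar. marg f {y} S) \<le> (\<Sum>y\<in>Ostar. if y \<in> L then a else b)"
    using marg_alg3_le_threshold[OF mono submod not_full \<open>0 \<le> opt\<close>] \<open>Ostar \<subseteq> set es\<close>
    unfolding S_def L_def a_def b_def T_def by (intro sum_mono) blast
  also have "\<dots> = real (card (Ostar \<inter> L)) * a + (real k - real (card (Ostar \<inter> L))) * b"
    using \<open>finite Ostar\<close> \<open>card Ostar = k\<close> card_Int_Diff[of Ostar L]
    by (simp add: sum.If_cases Int_def set_diff_eq of_nat_diff)
  finally have "opt \<le> f S + real (card (Ostar \<inter> L)) * a + (real k - real (card (Ostar \<inter> L))) * b"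
    by simp
  moreover have "real (card (Ostar \<inter> L)) * a = q * ((1 + alg_eps) / 2)"
    and "(real k - real (card (Ostar \<inter> L))) * b = (real k * T - q) * ((1 - alg_delta) / 2)"
    by (simp_all add: q_def a_def b_def field_simps)
  moreover have "real k * T = opt" using not_full by (simp add: T_def)
  ultimately have "opt \<le> f S + q * ((1 + alg_eps) / 2) + (opt - q) * ((1 - alg_delta) / 2)"
    by simp
  moreover have "q \<le> 11 / 10 * alg_beta * opt"
  proof -
    have "0 \<le> T" using \<open>0 \<le> opt\<close> by (simp add: T_def)
    then have "q \<le> 11 / 10 * alg_beta * real k * T"
      using mult_right_mono[OF OL] by (simp add: q_def L_def)
    then show ?thesis by (simp only: mult.assoc \<open>real k * T = opt\<close>)
  qed
  ultimately show ?thesis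
    using \<open>0 \<le> opt\<close> unfolding S_def alg_eps_def alg_delta_def alg_beta_def by (simp add: field_simps)
qed

end

theorem mainTheorem8:
  fixes V :: "'a set" and f :: "'a set \<Rightarrow> real" and k :: nat
    and Ostar :: "'a set" and es :: "'a list"
  assumes finV: "finite V"
    and nonneg: "\<forall>S. S \<subseteq> V \<longrightarrow> f S \<ge> 0"
    and mono: "monotone_set_fun V f"
    and submod: "submodular_set_fun V f"
    and norm: "f {} = 0"
    and kpos: "0 < k" and kn: "k \<le> card V"
    and OV: "Ostar \<subseteq> V" and Ocard: "card Ostar = k" and Oopt: "f Ostar = OPT_val V f k"
    and es_dist: "distinct es" and es_set: "set es = V"
    and SL: "f (alg3_SL f k (OPT_val V f k) es) \<ge> 3 / 10^3 * OPT_val V f k"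
    and OL_lo: "9 / 10 * alg_beta * real k
                \<le> real (card (Ostar \<inter> set (take (nat \<lfloor>alg_beta * real (length es)\<rfloor>) es)))"
    and OL_hi: "real (card (Ostar \<inter> set (take (nat \<lfloor>alg_beta * real (length es)\<rfloor>) es)))
                \<le> 11 / 10 * alg_beta * real k"
  shows "f (alg3 f k (OPT_val V f k) es) \<ge> (1/2 + 9 / 10^12) * OPT_val V f k"
proof -
  have "0 \<le> OPT_val V f k" using nonneg OV unfolding Oopt[symmetric] by blast
  have "card (alg3 f k (OPT_val V f k) es) \<le> k" by (simp add: alg3_def card_alg3_run_le)
  then consider "card (alg3 f k (OPT_val V f k) es) = k" | "card (alg3 f k (OPT_val V f k) es) < k"
    by linarith
  then show ?thesis
  proof cases
    case 1
    show ?thesis using alg3_value_if_full[OF 1 kpos \<open>0 \<le> OPT_val V f k\<close> norm SL] .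
  next
    case 2
    show ?thesis
      using alg3_value_if_not_full[OF mono[folded es_set] submod[folded es_set] 2 OV[folded es_set]
          Ocard Oopt \<open>0 \<le> OPT_val V f k\<close> OL_hi] .
  qed
qed

end
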